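(* Let $T\in S(n,d)$ and let $\sigma$ be a simplex on $\gamma_d$ with vertices among the $n$ points of $C(n,d)$. Then $\sigma\le_{d+1}T$ if and only if for every $\tau\in T$, either $\sigma$ and $\tau$ do not overlap in $\mathbb{R}^d$ or $\sigma<_{d+1}\tau$.
   Context: $\gamma_d=\{(t,t^2,\dots,t^d):t\in\mathbb{R}\}$. Fix $t_1<\dots<t_n$ and the points $\gamma_d(t_i)$, identified with $i\in[n]$; $C(n,d)$ is their convex hull (cyclic polytope). $S(n,d)$ is the set of triangulations of $C(n,d)$ (geometric simplicial complexes with union $C(n,d)$) whose vertices lie in $[n]$. A simplex is a subset $\sigma$ of size at most $d+1$, identified with $\mathrm{conv}(\sigma)$; two simplices overlap if $\mathrm{conv}(\sigma)\cap\mathrm{conv}(\tau)\supsetneq\mathrm{conv}(\sigma\cap\tau)$. For $\sigma=\{\gamma_d(s_1),\dots,\gamma_d(s_k)\}$, the height function $h_\sigma:\mathrm{conv}(\sigma)\to\mathbb{R}$ gives the last coordinate of the point of $\mathrm{conv}\{\gamma_{d+1}(s_1),\dots,\gamma_{d+1}(s_k)\}$ projecting (by deleting the last coordinate) to $p$. $\sigma<_{d+1}\tau$ means $\sigma,\tau$ overlap in $\mathbb{R}^d$ and $h_\sigma\le h_\tau$ on the common domain. For $T\in S(n,d)$, $h_T:C(n,d)\to\mathbb{R}$ is defined by $h_T(p)=h_\tau(p)$ for $p\in\mathrm{conv}(\tau)$, $\tau\in T$ (well defined). $\sigma\le_{d+1}T$ means $h_\sigma(p)\le h_T(p)$ for all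 $p\in\mathrm{conv}(\sigma)$. *)

theory Defs
  imports Complex_Main
begin

text \<open>Points of R^m are represented as functions nat => real whose coordinates
  1..m are meaningful (all other coordinates are 0 for the points considered).
  The parameters of the n points are t 1 < ... < t n; point i is gamma_d(t i).\<close>

definition gam :: "nat \<Rightarrow> real \<Rightarrow> (nat \<Rightarrow> real)" where
  "gam d s = (\<lambda>k. if 1 \<le> k \<and> k \<le> d then s ^ k else 0)"

definition conv :: "nat \<Rightarrow> (nat \<Rightarrow> real) \<Rightarrow> nat set \<Rightarrow> (nat \<Rightarrow> real) set" where
  "conv d t \<sigma> = {p. \<exists>a :: nat \<Rightarrow> real. (\<forall>i\<in>\<sigma>. 0 \<le> a i) \<and> sum a \<sigma> = 1 \<and>
                     p = (\<lambda>k. \<Sum>i\<in>\<sigma>. a i * gam d (t i) k)}"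

definition proj :: "nat \<Rightarrow> (nat \<Rightarrow> real) \<Rightarrow> (nat \<Rightarrow> real)" where
  "proj d q = q(Suc d := 0)"

definition height :: "nat \<Rightarrow> (nat \<Rightarrow> real) \<Rightarrow> nat set \<Rightarrow> (nat \<Rightarrow> real) \<Rightarrow> real" where
  "height d t \<sigma> p = (THE y. \<exists>q\<in>conv (Suc d) t \<sigma>. proj d q = p \<and> q (Suc d) = y)"

definition is_simplex :: "nat \<Rightarrow> nat \<Rightarrow> nat set \<Rightarrow> bool" where
  "is_simplex n d \<sigma> \<longleftrightarrow> \<sigma> \<subseteq> {1..n} \<and> card \<sigma> \<le> Suc d"

definition overlap :: "nat \<Rightarrow> (nat \<Rightarrow> real) \<Rightarrow> nat set \<Rightarrow> nat set \<Rightarrow> bool" where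
  "overlap d t \<sigma> \<tau> \<longleftrightarrow> conv d t (\<sigma> \<inter> \<tau>) \<subset> conv d t \<sigma> \<inter> conv d t \<tau>"

definition below :: "nat \<Rightarrow> (nat \<Rightarrow> real) \<Rightarrow> nat set \<Rightarrow> nat set \<Rightarrow> bool" where
  "below d t \<sigma> \<tau> \<longleftrightarrow> overlap d t \<sigma> \<tau> \<and>
     (\<forall>p \<in> conv d t \<sigma> \<inter> conv d t \<tau>. height d t \<sigma> p \<le> height d t \<tau> p)"

text \<open>Triangulations S(n,d): geometric simplicial complexes (nonempty simplices,
  closed under nonempty faces, any two meeting in a common face, i.e. not overlapping)
  with vertices in [n] whose union is C(n,d).\<close>
definition triang :: "nat \<Rightarrow> nat \<Rightarrow> (nat \<Rightarrow> real) \<Rightarrow> nat set set \<Rightarrow> bool" where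
  "triang n d t T \<longleftrightarrow> finite T \<and>
     (\<forall>\<sigma>\<in>T. is_simplex n d \<sigma> \<and> \<sigma> \<noteq> {}) \<and>
     (\<forall>\<sigma>\<in>T. \<forall>\<rho>. \<rho> \<subseteq> \<sigma> \<and> \<rho> \<noteq> {} \<longrightarrow> \<rho> \<in> T) \<and>
     (\<forall>\<sigma>\<in>T. \<forall>\<tau>\<in>T. \<not> overlap d t \<sigma> \<tau>) \<and>
     (\<Union>\<tau>\<in>T. conv d t \<tau>) = conv d t {1..n}"

definition height_T :: "nat \<Rightarrow> (nat \<Rightarrow> real) \<Rightarrow> nat set set \<Rightarrow> (nat \<Rightarrow> real) \<Rightarrow> real" where
  "height_T d t T p = (THE y. \<exists>\<tau>\<in>T. p \<in> conv d t \<tau> \<and> y = height d t \<tau> p)"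

definition below_T :: "nat \<Rightarrow> (nat \<Rightarrow> real) \<Rightarrow> nat set \<Rightarrow> nat set set \<Rightarrow> bool" where
  "below_T d t \<sigma> T \<longleftrightarrow> (\<forall>p\<in>conv d t \<sigma>. height d t \<sigma> p \<le> height_T d t T p)"

end

theory Submission
  imports Defs "HOL-Computational_Algebra.Polynomial"
begin

text \<open>At most \<open>d + 1\<close> points with distinct parameters on the moment curve in
  \<open>\<real>\<^sup>d\<^sup>+\<^sup>1\<close> are affinely independent (a Vandermonde argument), so a point of
  \<open>conv \<sigma>\<close> has exactly one lift to the lifted simplex and \<open>h\<^sub>\<sigma>\<close> restricts to \<open>h\<^sub>\<rho>\<close>
  on every face \<open>\<rho>\<close> of \<open>\<sigma>\<close>. Two non-overlapping simplices meet in the convex hull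
  of their common face, so their height functions agree on their intersection; in
  particular \<open>h\<^sub>T\<close> coincides with \<open>h\<^sub>\<tau>\<close> on every \<open>\<tau> \<in> T\<close>. Hence \<open>\<sigma> \<le> T\<close> says that
  \<open>h\<^sub>\<sigma> \<le> h\<^sub>\<tau>\<close> on \<open>conv \<sigma> \<inter> conv \<tau>\<close> for every \<open>\<tau> \<in> T\<close>, which is automatic when
  \<open>\<sigma>\<close> and \<open>\<tau>\<close> do not overlap.\<close>

lemma power_sums_zero_imp_coeff_zero:
  fixes c x :: "'b \<Rightarrow> 'a::idom"
  assumes fin: "finite R" and card: "card R \<le> Suc d" and inj: "inj_on x R"
    and sums: "\<forall>k\<le>d. (\<Sum>i\<in>R. c i * x i ^ k) = 0" and j: "j \<in> R"
  shows "c j = 0"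
proof -
  define P where "P = (\<Prod>i\<in>R - {j}. [:- x i, 1:])"
  have poly_P: "poly P y = (\<Prod>i\<in>R - {j}. y - x i)" for y
    unfolding P_def poly_prod by simp
  have "degree P \<le> card (R - {j})"
    unfolding P_def using degree_prod_sum_le[of "R - {j}" "\<lambda>i. [:- x i, 1:]"] fin by simp
  also have "\<dots> \<le> d" using card j fin by (simp add: card_Diff_singleton)
  finally have deg: "degree P \<le> d" .
  have "(\<Sum>i\<in>R. c i * poly P (x i)) = (\<Sum>k\<le>degree P. coeff P k * (\<Sum>i\<in>R. c i * x i ^ k))"
    by (simp add: poly_altdef sum_distrib_left mult_ac sum.swap[of _ R])
  also have "\<dots> = 0" using sums deg by simp
  finally have "(\<Sum>i\<in>R. c i * poly P (x i)) = 0" .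
  moreover have "poly P (x i) = 0" if "i \<in> R - {j}" for i
    using that fin unfolding poly_P by (intro prod_zero) auto
  ultimately have "c j * poly P (x j) = 0"
    using fin j by (simp add: sum.remove)
  moreover have "poly P (x j) \<noteq> 0"
    using fin inj j by (auto simp: poly_P prod_zero_iff dest: inj_onD)
  ultimately show ?thesis by simp
qed

definition proper_simplex :: "nat \<Rightarrow> (nat \<Rightarrow> real) \<Rightarrow> nat set \<Rightarrow> bool" where
  "proper_simplex d t R \<longleftrightarrow> finite R \<and> card R \<le> Suc d \<and> inj_on t R"

lemma proper_simplex_subset: "proper_simplex d t R \<Longrightarrow> R' \<subseteq> R \<Longrightarrow> proper_simplex d t R'"
  unfolding proper_simplex_def by (meson card_mono finite_subset inj_on_subset le_trans)

lemma proper_simplex_if_is_simplex: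
  "strict_mono_on {1..n} t \<Longrightarrow> is_simplex n d R \<Longrightarrow> proper_simplex d t R"
  unfolding proper_simplex_def is_simplex_def
  by (meson finite_atLeastAtMost finite_subset inj_on_subset strict_mono_on_imp_inj_on)

lemma conv_mono:
  assumes fin: "finite R" and sub: "R' \<subseteq> R"
  shows "conv d t R' \<subseteq> conv d t R"
proof
  fix p assume "p \<in> conv d t R'"
  then obtain a where a: "\<forall>i\<in>R'. 0 \<le> a i" "sum a R' = 1"
    "p = (\<lambda>k. \<Sum>i\<in>R'. a i * gam d (t i) k)" unfolding conv_def by blast
  define b where "b i = (if i \<in> R' then a i else 0)" for i
  have extend: "(\<Sum>i\<in>R. b i * f i) = (\<Sum>i\<in>R'. a i * f i)" for f :: "nat \<Rightarrow> real"
    using fin sub by (subst sum.mono_neutral_right[of R R']) (auto simp: b_def)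
  have "sum b R = 1" using extend[of "\<lambda>_. 1"] a(2) by simp
  moreover have "p = (\<lambda>k. \<Sum>i\<in>R. b i * gam d (t i) k)" using a(3) extend by simp
  moreover have "\<forall>i\<in>R. 0 \<le> b i" using a(1) by (simp add: b_def)
  ultimately show "p \<in> conv d t R" unfolding conv_def by blast
qed

lemma conv_lift_exists:
  assumes "p \<in> conv d t R"
  obtains q where "q \<in> conv (Suc d) t R" and "proj d q = p"
proof -
  obtain a where a: "\<forall>i\<in>R. 0 \<le> a i" "sum a R = 1"
    "p = (\<lambda>k. \<Sum>i\<in>R. a i * gam d (t i) k)" using assms unfolding conv_def by blast
  define q where "q = (\<lambda>k. \<Sum>i\<in>R. a i * gam (Suc d) (t i) k)"
  have "q \<in> conv (Suc d) t R" using a unfolding conv_def q_def by blast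
  moreover have "proj d q = p"
    by (rule ext) (auto simp: proj_def q_def a(3) gam_def intro!: sum.cong)
  ultimately show ?thesis by (rule that)
qed

lemma inj_on_proj_conv:
  assumes "proper_simplex d t R"
  shows "inj_on (proj d) (conv (Suc d) t R)"
proof
  fix q q' assume "q \<in> conv (Suc d) t R" "q' \<in> conv (Suc d) t R" and pq: "proj d q = proj d q'"
  then obtain a b where a: "sum a R = 1" "q = (\<lambda>k. \<Sum>i\<in>R. a i * gam (Suc d) (t i) k)"
    and b: "sum b R = 1" "q' = (\<lambda>k. \<Sum>i\<in>R. b i * gam (Suc d) (t i) k)"
    unfolding conv_def by blast
  have "(\<Sum>i\<in>R. (a i - b i) * t i ^ k) = 0" if k: "k \<le> d" for k
  proof (cases "k = 0")
    case True
    then show ?thesis using a b by (simp add: sum_subtractf)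
  next
    case False
    have "q k = q' k" using fun_cong[OF pq, of k] k by (simp add: proj_def)
    then show ?thesis
      using a b k False by (simp add: gam_def sum_subtractf left_diff_distrib)
  qed
  then have "a i = b i" if "i \<in> R" for i
    using power_sums_zero_imp_coeff_zero[of R d t "\<lambda>i. a i - b i" i] assms that
    unfolding proper_simplex_def by simp
  then show "q = q'" using a(2) b(2) by simp
qed

lemma height_proj:
  assumes "proper_simplex d t R" and q: "q \<in> conv (Suc d) t R"
  shows "height d t R (proj d q) = q (Suc d)"
  unfolding height_def
proof (rule the_equality)
  show "\<exists>q'\<in>conv (Suc d) t R. proj d q' = proj d q \<and> q' (Suc d) = q (Suc d)"
    using q by blast
next
  fix y assume "\<exists>q'\<in>conv (Suc d) t R. proj d q' = proj d q \<and> q' (Suc d) = y"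
  then show "y = q (Suc d)" using inj_on_proj_conv[OF assms(1)] q by (auto dest: inj_onD)
qed

lemma height_face:
  assumes R: "proper_simplex d t R" and sub: "R' \<subseteq> R" and p: "p \<in> conv d t R'"
  shows "height d t R' p = height d t R p"
proof -
  obtain q where q: "q \<in> conv (Suc d) t R'" "proj d q = p" using conv_lift_exists[OF p] .
  have "finite R" using R unfolding proper_simplex_def by simp
  then have qR: "q \<in> conv (Suc d) t R" using conv_mono[OF _ sub] q(1) by blast
  show ?thesis
    using height_proj[OF proper_simplex_subset[OF R sub] q(1)] height_proj[OF R qR]
    unfolding q(2) by simp
qed

lemma conv_Int_if_not_overlap:
  assumes "finite A" "finite B" and "\<not> overlap d t A B"
  shows "conv d t A \<inter> conv d t B = conv d t (A \<inter> B)"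
  using assms conv_mono[OF assms(1), of "A \<inter> B"] conv_mono[OF assms(2), of "A \<inter> B"]
  unfolding overlap_def by blast

lemma height_eq_if_not_overlap:
  assumes \<sigma>: "proper_simplex d t \<sigma>" and \<tau>: "proper_simplex d t \<tau>"
    and "\<not> overlap d t \<sigma> \<tau>" and "p \<in> conv d t \<sigma>" "p \<in> conv d t \<tau>"
  shows "height d t \<sigma> p = height d t \<tau> p"
proof -
  have "p \<in> conv d t (\<sigma> \<inter> \<tau>)"
    using conv_Int_if_not_overlap[of \<sigma> \<tau> d t] assms unfolding proper_simplex_def by blast
  then show ?thesis
    using height_face[OF \<sigma>, of "\<sigma> \<inter> \<tau>"] height_face[OF \<tau>, of "\<sigma> \<inter> \<tau>"] by simp
qed

lemma triang_proper_simplex: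
  assumes "strict_mono_on {1..n} t" and "triang n d t T" and "\<tau> \<in> T"
  shows "proper_simplex d t \<tau>"
proof -
  have "is_simplex n d \<tau>" using assms(2,3) unfolding triang_def by (elim conjE) blast
  then show ?thesis using proper_simplex_if_is_simplex[OF assms(1)] by blast
qed

lemma triang_not_overlap: "triang n d t T \<Longrightarrow> \<sigma> \<in> T \<Longrightarrow> \<tau> \<in> T \<Longrightarrow> \<not> overlap d t \<sigma> \<tau>"
  unfolding triang_def by (elim conjE) blast

lemma triang_covers:
  assumes "triang n d t T" and "p \<in> conv d t {1..n}"
  obtains \<tau> where "\<tau> \<in> T" and "p \<in> conv d t \<tau>"
proof -
  have "(\<Union>\<tau>\<in>T. conv d t \<tau>) = conv d t {1..n}" using assms(1) unfolding triang_def by (elim conjE)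
  then show ?thesis using assms(2) that by blast
qed

lemma height_T_eq:
  assumes "strict_mono_on {1..n} t" and "triang n d t T" and "\<tau> \<in> T" and "p \<in> conv d t \<tau>"
  shows "height_T d t T p = height d t \<tau> p"
  unfolding height_T_def
proof (rule the_equality)
  show "\<exists>\<tau>'\<in>T. p \<in> conv d t \<tau>' \<and> height d t \<tau> p = height d t \<tau>' p"
    using assms(3,4) by blast
next
  fix y assume "\<exists>\<tau>'\<in>T. p \<in> conv d t \<tau>' \<and> y = height d t \<tau>' p"
  then obtain \<tau>' where \<tau>': "\<tau>' \<in> T" "p \<in> conv d t \<tau>'" "y = height d t \<tau>' p" by blast
  have "height d t \<tau>' p = height d t \<tau> p"
    using height_eq_if_not_overlap[OF triang_proper_simplex[OF assms(1,2) \<tau>'(1)]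
        triang_proper_simplex[OF assms(1,2,3)] triang_not_overlap[OF assms(2) \<tau>'(1) assms(3)]]
      \<tau>'(2) assms(4) .
  then show "y = height d t \<tau> p" using \<tau>'(3) by simp
qed

theorem lemma2p9:
  fixes n d :: nat and t :: "nat \<Rightarrow> real" and T :: "nat set set" and \<sigma> :: "nat set"
  assumes "strict_mono_on {1..n} t"
    and "triang n d t T"
    and "is_simplex n d \<sigma>"
  shows "below_T d t \<sigma> T \<longleftrightarrow> (\<forall>\<tau>\<in>T. \<not> overlap d t \<sigma> \<tau> \<or> below d t \<sigma> \<tau>)"
proof
  assume "below_T d t \<sigma> T"
  then show "\<forall>\<tau>\<in>T. \<not> overlap d t \<sigma> \<tau> \<or> below d t \<sigma> \<tau>"
    using height_T_eq[OF assms(1,2)] unfolding below_T_def below_def by auto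
next
  assume below_all: "\<forall>\<tau>\<in>T. \<not> overlap d t \<sigma> \<tau> \<or> below d t \<sigma> \<tau>"
  have \<sigma>: "proper_simplex d t \<sigma>" using proper_simplex_if_is_simplex[OF assms(1,3)] .
  show "below_T d t \<sigma> T" unfolding below_T_def
  proof
    fix p assume p: "p \<in> conv d t \<sigma>"
    have "p \<in> conv d t {1..n}"
      using conv_mono[of "{1..n}" \<sigma>] p assms(3) unfolding is_simplex_def by auto
    then obtain \<tau> where \<tau>: "\<tau> \<in> T" "p \<in> conv d t \<tau>" using triang_covers[OF assms(2)] by blast
    then have "height d t \<sigma> p \<le> height d t \<tau> p"
      using below_all p height_eq_if_not_overlap[OF \<sigma> triang_proper_simplex[OF assms(1,2)]]
      unfolding below_def by force
    then show "height d t \<sigma> p \<le> height_T d t T p" using height_T_eq[OF assms(1,2) \<tau>] by simp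
  qed
qed

end
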